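(* Let $(X,d)$ be a finite ultrametric space with $|X|\geqslant 2$ and $X\cap\operatorname{Sp}(X)=\varnothing$. Then $(X,d)\in\mathfrak U$ if and only if the representing tree $T_X$ of $(X,d)$ is strictly binary and distinct internal nodes of $T_X$ carry distinct labels.
   Context: $\operatorname{Sp}(X)=\{d(x,y):x\neq y\}$, $\operatorname{diam}X=\max d(x,y)$; $\mathfrak U$ is the class of finite ultrametric spaces $X$ with $|\operatorname{Sp}(X)|=|X|-1$. For a finite ultrametric space with $|X|\ge2$, the relation $x\sim y\iff d(x,y)<\operatorname{diam}X$ is an equivalence relation with $k\geqslant 2$ classes $X_1,\dots,X_k$; these are the parts of the diametral graph $G_d$ (vertices $X$, edges the pairs at distance $\operatorname{diam}X$), which is complete $k$-partite $G[X_1,\dots,X_k]$. The representing tree $T_X$ (a labelled rooted tree) is defined recursively: if $X=\{x\}$, $T_X$ is a single node labelled $x$. If $|X|\geqslant2$, the root is labelled $\operatorname{diam}X$ and has $k$ children, one for each part $X_i$, the child for $X_i$ being labelled $\operatorname{diam}X_i$ if $|X_i|\ge2$ and labelled $x$ if $X_i=\{x\}$; the subtree below the child for $X_i$ with $|X_i|\ge 2$ is built from the subspace $X_i$ in the same way. Thus leaves are labelled by the points of $X$ (bijectively) and internal nodes by elements of $\operatorname{Sp}(X)$. A strictly binary tree is a rooted tree whose root is adjacent to exactly two nodes and whose non-root internal nodes (non-leaves) are adjacent to exactly three nodes; a one-node tree is strictly binary. *)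

theory Defs
  imports Complex_Main
begin

definition ultrametric :: "'a set \<Rightarrow> ('a \<Rightarrow> 'a \<Rightarrow> real) \<Rightarrow> bool" where
  "ultrametric X d \<longleftrightarrow>
     (\<forall>x\<in>X. \<forall>y\<in>X. d x y = d y x) \<and>
     (\<forall>x\<in>X. \<forall>y\<in>X. d x y = 0 \<longleftrightarrow> x = y) \<and>
     (\<forall>x\<in>X. \<forall>y\<in>X. d x y \<ge> 0) \<and>
     (\<forall>x\<in>X. \<forall>y\<in>X. \<forall>z\<in>X. d x z \<le> max (d x y) (d y z))"

definition Sp :: "('a \<Rightarrow> 'a \<Rightarrow> real) \<Rightarrow> 'a set \<Rightarrow> real set" where
  "Sp d X = {d x y | x y. x \<in> X \<and> y \<in> X \<and> x \<noteq> y}"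

definition diam :: "('a \<Rightarrow> 'a \<Rightarrow> real) \<Rightarrow> 'a set \<Rightarrow> real" where
  "diam d X = Max {d x y | x y. x \<in> X \<and> y \<in> X}"

definition in_U :: "'a set \<Rightarrow> ('a \<Rightarrow> 'a \<Rightarrow> real) \<Rightarrow> bool" where
  "in_U X d \<longleftrightarrow> finite X \<and> ultrametric X d \<and> card (Sp d X) = card X - 1"

definition parts :: "('a \<Rightarrow> 'a \<Rightarrow> real) \<Rightarrow> 'a set \<Rightarrow> 'a set set" where
  "parts d B = B // {(x, y). x \<in> B \<and> y \<in> B \<and> d x y < diam d B}"

text \<open>Each node of T_X is identified with the subset of X
  it was built from: the root is X, and a node B with |B| \<ge> 2 has one child
  for each part of B.\<close>
inductive_set tnodes :: "('a \<Rightarrow> 'a \<Rightarrow> real) \<Rightarrow> 'a set \<Rightarrow> 'a set set"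
  for d :: "'a \<Rightarrow> 'a \<Rightarrow> real" and X :: "'a set" where
  root: "X \<in> tnodes d X"
| child: "B \<in> tnodes d X \<Longrightarrow> 2 \<le> card B \<Longrightarrow> C \<in> parts d B \<Longrightarrow> C \<in> tnodes d X"

definition tinternal :: "('a \<Rightarrow> 'a \<Rightarrow> real) \<Rightarrow> 'a set \<Rightarrow> 'a set set" where
  "tinternal d X = {B \<in> tnodes d X. 2 \<le> card B}"

text \<open>Labels: points of X for leaves, elements of Sp(X) for internal nodes.
  The sum type keeps the two kinds of labels apart.\<close>
definition tlabel :: "('a \<Rightarrow> 'a \<Rightarrow> real) \<Rightarrow> 'a set \<Rightarrow> 'a + real" where
  "tlabel d B = (if 2 \<le> card B then Inr (diam d B) else Inl (the_elem B))"

definition tadj :: "('a \<Rightarrow> 'a \<Rightarrow> real) \<Rightarrow> 'a set \<Rightarrow> 'a set \<Rightarrow> 'a set \<Rightarrow> bool" where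
  "tadj d X B C \<longleftrightarrow>
     (B \<in> tinternal d X \<and> C \<in> parts d B) \<or> (C \<in> tinternal d X \<and> B \<in> parts d C)"

definition strictly_binary :: "('a \<Rightarrow> 'a \<Rightarrow> real) \<Rightarrow> 'a set \<Rightarrow> bool" where
  "strictly_binary d X \<longleftrightarrow>
     (X \<in> tinternal d X \<longrightarrow> card {C \<in> tnodes d X. tadj d X X C} = 2) \<and>
     (\<forall>B \<in> tinternal d X. B \<noteq> X \<longrightarrow> card {C \<in> tnodes d X. tadj d X B C} = 3)"

end

theory Submission
  imports Defs
begin

text \<open>Two points lying in different parts of a node \<open>I\<close> are at distance \<open>diam I\<close>, so
  \<open>Sp(X)\<close> is exactly the set of labels of the internal nodes.  If the internal node \<open>I\<close>
  has \<open>k\<^sub>I \<ge> 2\<close> children, counting leaves gives \<open>|X| = 1 + \<Sum>\<^sub>I (k\<^sub>I - 1)\<close>; hence there are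
  at most \<open>|X| - 1\<close> internal nodes, with equality iff every \<open>k\<^sub>I = 2\<close>.  So \<open>|Sp(X)| = |X| - 1\<close>
  iff all \<open>k\<^sub>I = 2\<close> and the labels are distinct.  Finally \<open>k\<^sub>I = 2\<close> for all \<open>I\<close> means strictly
  binary, because each non-root node has exactly one parent: every node \<open>N\<close> is the closed
  ball of radius \<open>diam N\<close> around any of its points.\<close>

lemma finite_distances: "finite B \<Longrightarrow> finite {d x y | x y. x \<in> B \<and> y \<in> B}"
proof -
  have "{d x y | x y. x \<in> B \<and> y \<in> B} = case_prod d ` (B \<times> B)" by auto
  then show "finite B \<Longrightarrow> ?thesis" by simp
qed

lemma diam_ge: "finite B \<Longrightarrow> x \<in> B \<Longrightarrow> y \<in> B \<Longrightarrow> d x y \<le> diam d B"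
  unfolding diam_def by (rule Max_ge) (auto intro: finite_distances)

lemma diam_attained:
  assumes "finite B" "B \<noteq> {}"
  obtains x y where "x \<in> B" "y \<in> B" "diam d B = d x y"
proof -
  have "diam d B \<in> {d x y | x y. x \<in> B \<and> y \<in> B}"
    unfolding diam_def using assms by (intro Max_in finite_distances) auto
  then show ?thesis using that by blast
qed

lemma diam_less:
  assumes "finite B" "B \<noteq> {}" "\<And>x y. x \<in> B \<Longrightarrow> y \<in> B \<Longrightarrow> d x y < r"
  shows "diam d B < r"
  using assms by (metis diam_attained)

definition diam_rel :: "('a \<Rightarrow> 'a \<Rightarrow> real) \<Rightarrow> 'a set \<Rightarrow> ('a \<times> 'a) set" where
  "diam_rel d B = {(x, y). x \<in> B \<and> y \<in> B \<and> d x y < diam d B}"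

lemma parts_eq_quotient: "parts d B = B // diam_rel d B"
  unfolding parts_def diam_rel_def ..

lemma parts_subset: "P \<in> parts d B \<Longrightarrow> P \<subseteq> B"
  unfolding parts_def by (auto elim!: quotientE)

lemma tnodes_subset: "N \<in> tnodes d B \<Longrightarrow> N \<subseteq> B"
  by (induction rule: tnodes.induct) (auto dest: parts_subset)

lemma tnodes_trans: "C \<in> tnodes d P \<Longrightarrow> P \<in> tnodes d B \<Longrightarrow> C \<in> tnodes d B"
  by (induction rule: tnodes.induct) (auto intro: tnodes.child)

lemma tnodes_small: "card B < 2 \<Longrightarrow> tnodes d B = {B}"
proof (intro equalityI subsetI)
  fix N assume "N \<in> tnodes d B" "card B < 2"
  then show "N \<in> {B}" by (induction rule: tnodes.induct) auto
qed (auto intro: tnodes.root)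

lemma tnodes_unfold: "2 \<le> card B \<Longrightarrow> tnodes d B = insert B (\<Union>P\<in>parts d B. tnodes d P)"
proof (intro equalityI subsetI)
  fix N assume "N \<in> tnodes d B" "2 \<le> card B"
  then show "N \<in> insert B (\<Union>P\<in>parts d B. tnodes d P)"
    by (induction rule: tnodes.induct) (auto intro: tnodes.root tnodes.child)
next
  fix N assume c: "2 \<le> card B" and "N \<in> insert B (\<Union>P\<in>parts d B. tnodes d P)"
  then show "N \<in> tnodes d B"
    by (auto intro: tnodes.root tnodes_trans tnodes.child[OF tnodes.root c])
qed

lemma tinternal_small: "card B < 2 \<Longrightarrow> tinternal d B = {}"
  unfolding tinternal_def by (auto simp: tnodes_small)

lemma tinternal_unfold:
  "2 \<le> card B \<Longrightarrow> tinternal d B = insert B (\<Union>P\<in>parts d B. tinternal d P)"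
  unfolding tinternal_def by (auto simp: tnodes_unfold)

lemma tinternal_subspace: "I \<in> tinternal d B \<Longrightarrow> I \<subseteq> B \<and> 2 \<le> card I"
  unfolding tinternal_def by (auto dest: tnodes_subset)

lemma finite_tinternal: "finite B \<Longrightarrow> finite (tinternal d B)"
  by (rule finite_subset[of _ "Pow B"]) (auto dest: tinternal_subspace)

lemma inj_on_tlabel_tinternal: "inj_on (tlabel d) (tinternal d X) \<longleftrightarrow> inj_on (diam d) (tinternal d X)"
  unfolding inj_on_def tlabel_def tinternal_def by auto

locale finite_ultrametric =
  fixes X :: "'a set" and d :: "'a \<Rightarrow> 'a \<Rightarrow> real"
  assumes ultrametric: "ultrametric X d" and finite_X: "finite X"
begin

lemma finite_subspace: "B \<subseteq> X \<Longrightarrow> finite B"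
  using finite_X finite_subset by blast

lemma dist_sym: "x \<in> X \<Longrightarrow> y \<in> X \<Longrightarrow> d x y = d y x"
  using ultrametric unfolding ultrametric_def by blast

lemma dist_le_max: "x \<in> X \<Longrightarrow> y \<in> X \<Longrightarrow> z \<in> X \<Longrightarrow> d x z \<le> max (d x y) (d y z)"
  using ultrametric unfolding ultrametric_def by blast

lemma dist_nonneg: "x \<in> X \<Longrightarrow> y \<in> X \<Longrightarrow> 0 \<le> d x y"
  using ultrametric unfolding ultrametric_def by blast

lemma dist_eq_0_iff: "x \<in> X \<Longrightarrow> y \<in> X \<Longrightarrow> d x y = 0 \<longleftrightarrow> x = y"
  using ultrametric unfolding ultrametric_def by blast

lemma diam_pos:
  assumes "B \<subseteq> X" "2 \<le> card B"
  shows "0 < diam d B"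
proof -
  obtain a b where ab: "a \<in> B" "b \<in> B" "a \<noteq> b"
    using assms(2) card_le_Suc0_iff_eq[OF finite_subspace[OF assms(1)]] by force
  have "0 \<le> d a b" using dist_nonneg ab assms(1) by blast
  moreover have "d a b \<noteq> 0" using dist_eq_0_iff ab assms(1) by blast
  ultimately show ?thesis using diam_ge[OF finite_subspace[OF assms(1)] ab(1,2), of d] by linarith
qed

lemma equiv_diam_rel:
  assumes "B \<subseteq> X" "2 \<le> card B"
  shows "equiv B (diam_rel d B)"
proof (rule equivI)
  show "diam_rel d B \<subseteq> B \<times> B" unfolding diam_rel_def by auto
  show "refl_on B (diam_rel d B)"
    using diam_pos[OF assms] dist_eq_0_iff assms(1)
    unfolding refl_on_def diam_rel_def by (force simp: subset_iff)
  show "sym (diam_rel d B)"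
    using assms(1) dist_sym unfolding sym_def diam_rel_def by (auto simp: subset_iff)
  show "trans (diam_rel d B)"
    using assms(1) dist_le_max unfolding trans_def diam_rel_def
    by (clarsimp simp: subset_iff) (meson le_less_trans max_less_iff_conj)
qed

context
  fixes B assumes B_sub: "B \<subseteq> X" and B_card: "2 \<le> card B"
begin

lemma part_eq_class:
  assumes P: "P \<in> parts d B" and x: "x \<in> P"
  shows "P = {y \<in> B. d x y < diam d B}"
proof -
  note eqv = equiv_diam_rel[OF B_sub B_card] and Q = P[unfolded parts_eq_quotient]
  have "y \<in> P \<longleftrightarrow> (x, y) \<in> diam_rel d B" for y
    using in_quotient_imp_in_rel[OF eqv Q, of x y] in_quotient_imp_closed[OF eqv Q x, of y] x
    by blast
  moreover have "x \<in> B" using parts_subset[OF P] x by blast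
  ultimately show ?thesis unfolding diam_rel_def by auto
qed

lemma part_nonempty: "P \<in> parts d B \<Longrightarrow> P \<noteq> {}"
  unfolding parts_eq_quotient by (rule in_quotient_imp_non_empty[OF equiv_diam_rel[OF B_sub B_card]])

lemma parts_disjoint: "P \<in> parts d B \<Longrightarrow> Q \<in> parts d B \<Longrightarrow> P \<noteq> Q \<Longrightarrow> P \<inter> Q = {}"
  unfolding parts_eq_quotient using quotient_disj[OF equiv_diam_rel[OF B_sub B_card]] by blast

lemma Union_parts: "\<Union>(parts d B) = B"
  unfolding parts_eq_quotient by (rule Union_quotient[OF equiv_diam_rel[OF B_sub B_card]])

lemma finite_part: "P \<in> parts d B \<Longrightarrow> finite P"
  by (rule finite_subspace[OF subset_trans[OF parts_subset B_sub]])

lemma finite_parts: "finite (parts d B)"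
  unfolding parts_eq_quotient
  by (rule finite_quotient[OF finite_subspace[OF B_sub]]) (auto simp: diam_rel_def)

lemma dist_across_parts:
  assumes P: "P \<in> parts d B" and Q: "Q \<in> parts d B" and "P \<noteq> Q" and x: "x \<in> P" and y: "y \<in> Q"
  shows "d x y = diam d B"
proof -
  have "y \<notin> P" using parts_disjoint[OF P Q \<open>P \<noteq> Q\<close>] y by blast
  moreover have "y \<in> B" using parts_subset[OF Q] y by blast
  ultimately have "\<not> d x y < diam d B" using part_eq_class[OF P x] by blast
  moreover have "d x y \<le> diam d B"
    using diam_ge[OF finite_subspace[OF B_sub]] parts_subset[OF P] x \<open>y \<in> B\<close> by blast
  ultimately show ?thesis by linarith
qed

lemma two_distinct_parts:
  obtains P Q where "P \<in> parts d B" "Q \<in> parts d B" "P \<noteq> Q"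
proof -
  have "B \<noteq> {}" using B_card by auto
  then obtain x y where xy: "x \<in> B" "y \<in> B" "diam d B = d x y"
    using diam_attained[OF finite_subspace[OF B_sub]] by blast
  obtain P Q where P: "P \<in> parts d B" "x \<in> P" and Q: "Q \<in> parts d B" "y \<in> Q"
    using xy(1,2) Union_parts by blast
  have "P \<noteq> Q"
  proof
    assume "P = Q"
    then have "d x y < diam d B" using part_eq_class[OF P] Q(2) by blast
    then show False using xy(3) by simp
  qed
  then show ?thesis using that P(1) Q(1) by blast
qed

lemma two_le_card_parts: "2 \<le> card (parts d B)"
proof -
  obtain P Q where "P \<in> parts d B" "Q \<in> parts d B" "P \<noteq> Q" by (rule two_distinct_parts)
  then have "card {P, Q} \<le> card (parts d B)" by (intro card_mono finite_parts) auto
  then show ?thesis using \<open>P \<noteq> Q\<close> by simp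
qed

lemma part_psubset:
  assumes P: "P \<in> parts d B"
  shows "P \<subset> B"
proof -
  obtain Q Q' where "Q \<in> parts d B" "Q' \<in> parts d B" "Q \<noteq> Q'" by (rule two_distinct_parts)
  then obtain R where R: "R \<in> parts d B" "R \<noteq> P" by metis
  have "R \<inter> P = {}" "R \<noteq> {}" "R \<subseteq> B"
    using parts_disjoint[OF R(1) P R(2)] part_nonempty[OF R(1)] parts_subset[OF R(1)] by auto
  then show ?thesis using parts_subset[OF P] by blast
qed

lemma diam_part_less:
  assumes "P \<in> parts d B"
  shows "diam d P < diam d B"
proof (rule diam_less)
  show "finite P" "P \<noteq> {}" using assms finite_part part_nonempty by auto
  fix x y assume "x \<in> P" "y \<in> P"
  then show "d x y < diam d B" using part_eq_class[OF assms \<open>x \<in> P\<close>] by blast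
qed

lemma sum_card_parts: "(\<Sum>P\<in>parts d B. card P) = card B"
proof -
  have "pairwise disjnt (parts d B)"
    using parts_disjoint unfolding pairwise_def disjnt_def by blast
  then have "card (\<Union>(parts d B)) = (\<Sum>P\<in>parts d B. card P)"
    using finite_part by (rule card_Union_disjoint)
  then show ?thesis using Union_parts by simp
qed

lemma Sp_unfold: "Sp d B = insert (diam d B) (\<Union>P\<in>parts d B. Sp d P)"
proof (intro equalityI subsetI)
  fix s assume "s \<in> Sp d B"
  then obtain x y where xy: "x \<in> B" "y \<in> B" "x \<noteq> y" "s = d x y" unfolding Sp_def by blast
  obtain P Q where P: "P \<in> parts d B" "x \<in> P" and Q: "Q \<in> parts d B" "y \<in> Q"
    using xy(1,2) Union_parts by blast
  show "s \<in> insert (diam d B) (\<Union>P\<in>parts d B. Sp d P)"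
  proof (cases "P = Q")
    case True
    then have "s \<in> Sp d P" using P(2) Q(2) xy(3,4) unfolding Sp_def by blast
    then show ?thesis using P(1) by blast
  next
    case False
    then show ?thesis using dist_across_parts[OF P(1) Q(1) False P(2) Q(2)] xy(4) by blast
  qed
next
  fix s assume s: "s \<in> insert (diam d B) (\<Union>P\<in>parts d B. Sp d P)"
  obtain P Q where PQ: "P \<in> parts d B" "Q \<in> parts d B" "P \<noteq> Q" by (rule two_distinct_parts)
  obtain x y where x: "x \<in> P" and y: "y \<in> Q"
    using part_nonempty[OF PQ(1)] part_nonempty[OF PQ(2)] by blast
  have "x \<in> B" "y \<in> B" "x \<noteq> y"
    using parts_subset[OF PQ(1)] parts_subset[OF PQ(2)] parts_disjoint[OF PQ] x y by blast+
  then have "diam d B \<in> Sp d B"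
    using dist_across_parts[OF PQ x y] unfolding Sp_def by force
  moreover have "Sp d P \<subseteq> Sp d B" if "P \<in> parts d B" for P
    using parts_subset[OF that] unfolding Sp_def by blast
  ultimately show "s \<in> Sp d B" using s by blast
qed

lemma tinternal_parts_disjoint:
  assumes "P \<in> parts d B" "Q \<in> parts d B" "P \<noteq> Q"
  shows "tinternal d P \<inter> tinternal d Q = {}"
proof (rule ccontr)
  assume "tinternal d P \<inter> tinternal d Q \<noteq> {}"
  then obtain I where "I \<in> tinternal d P" "I \<in> tinternal d Q" by blast
  then have "I \<subseteq> P \<inter> Q" "2 \<le> card I"
    using tinternal_subspace[of I d P] tinternal_subspace[of I d Q] by auto
  then show False using parts_disjoint[OF assms] by (metis card.empty not_numeral_le_zero subset_empty)
qed

lemma notin_tinternal_part: "P \<in> parts d B \<Longrightarrow> B \<notin> tinternal d P"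
  using part_psubset tinternal_subspace[of B d P] by blast

end

lemma subspace_induct [consumes 2, case_names singleton split]:
  assumes "B \<subseteq> X" "B \<noteq> {}"
    and singleton: "\<And>x. x \<in> X \<Longrightarrow> P {x}"
    and split: "\<And>B. B \<subseteq> X \<Longrightarrow> 2 \<le> card B \<Longrightarrow> (\<And>C. C \<in> parts d B \<Longrightarrow> P C) \<Longrightarrow> P B"
  shows "P B"
  using assms(1,2)
proof (induction "card B" arbitrary: B rule: less_induct)
  case less
  show ?case
  proof (cases "2 \<le> card B")
    case True
    show ?thesis
    proof (rule split[OF less.prems(1) True])
      fix C assume "C \<in> parts d B"
      then show "P C"
        using less part_psubset part_nonempty True finite_subspace
        by (meson order.trans psubset_card_mono psubset_imp_subset)
    qed
  next
    case False
    moreover have "card B \<noteq> 0" using less.prems finite_subspace by simp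
    ultimately have "card B = 1" by linarith
    then show ?thesis using singleton less.prems(1) by (metis card_1_singletonE insert_subset)
  qed
qed

lemma Sp_eq_diam_tinternal:
  "B \<subseteq> X \<Longrightarrow> B \<noteq> {} \<Longrightarrow> Sp d B = diam d ` tinternal d B"
proof (induction rule: subspace_induct)
  case (singleton x)
  then show ?case by (simp add: Sp_def tinternal_small)
next
  case (split B)
  then show ?case by (auto simp: Sp_unfold tinternal_unfold)
qed

lemma card_tinternal_identity:
  "B \<subseteq> X \<Longrightarrow> B \<noteq> {} \<Longrightarrow>
     card B + card (tinternal d B) = Suc (\<Sum>I\<in>tinternal d B. card (parts d I))"
proof (induction rule: subspace_induct)
  case (singleton x)
  then show ?case by (simp add: tinternal_small)
next
  case (split B)
  let ?k = "\<lambda>I. card (parts d I)"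
  have fin: "finite (parts d B)" "\<And>P. P \<in> parts d B \<Longrightarrow> finite (tinternal d P)"
    using finite_parts[OF split.hyps] finite_tinternal[OF finite_part[OF split.hyps]] by auto
  have disj: "\<forall>P\<in>parts d B. \<forall>Q\<in>parts d B. P \<noteq> Q \<longrightarrow> tinternal d P \<inter> tinternal d Q = {}"
    using tinternal_parts_disjoint[OF split.hyps] by blast
  let ?U = "\<Union>P\<in>parts d B. tinternal d P"
  have U: "finite ?U" "B \<notin> ?U" "tinternal d B = insert B ?U"
    using fin notin_tinternal_part[OF split.hyps] tinternal_unfold[OF split.hyps(2)] by auto
  have card_T: "card (tinternal d B) = Suc (\<Sum>P\<in>parts d B. card (tinternal d P))"
    using U card_UN_disjoint[OF fin(1) _ disj] fin(2) by simp
  have sum_T: "(\<Sum>I\<in>tinternal d B. ?k I) = ?k B + (\<Sum>P\<in>parts d B. \<Sum>I\<in>tinternal d P. ?k I)"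
    using U sum.UNION_disjoint[OF fin(1) _ disj] fin(2) by simp
  have "(\<Sum>P\<in>parts d B. card P + card (tinternal d P))
      = (\<Sum>P\<in>parts d B. Suc (\<Sum>I\<in>tinternal d P. ?k I))"
    using split.IH by (intro sum.cong) auto
  then have "card B + (\<Sum>P\<in>parts d B. card (tinternal d P))
      = (\<Sum>P\<in>parts d B. \<Sum>I\<in>tinternal d P. ?k I) + ?k B"
    by (simp add: sum.distrib sum_Suc sum_card_parts[OF split.hyps])
  then show ?case using card_T sum_T by simp
qed

lemma card_tinternal_bound:
  assumes "B \<subseteq> X" "B \<noteq> {}"
  shows "card (tinternal d B) + 1 \<le> card B"
    and "card (tinternal d B) + 1 = card B \<longleftrightarrow> (\<forall>I\<in>tinternal d B. card (parts d I) = 2)"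
proof -
  let ?T = "tinternal d B"
  have k: "2 \<le> card (parts d I)" if "I \<in> ?T" for I
    using two_le_card_parts tinternal_subspace[OF that] assms(1) by blast
  have "(\<Sum>I\<in>?T. card (parts d I)) = (\<Sum>I\<in>?T. 2 + (card (parts d I) - 2))"
    by (intro sum.cong) (auto dest!: k)
  also have "\<dots> = 2 * card ?T + (\<Sum>I\<in>?T. card (parts d I) - 2)"
    unfolding sum.distrib sum_constant by simp
  finally have "card B = card ?T + 1 + (\<Sum>I\<in>?T. card (parts d I) - 2)"
    using card_tinternal_identity[OF assms] by linarith
  moreover have "(\<Sum>I\<in>?T. card (parts d I) - 2) = 0 \<longleftrightarrow> (\<forall>I\<in>?T. card (parts d I) = 2)"
    using k finite_tinternal[OF finite_subspace[OF assms(1)]] by (force simp: sum_eq_0_iff)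
  ultimately show "card ?T + 1 \<le> card B"
    and "card ?T + 1 = card B \<longleftrightarrow> (\<forall>I\<in>?T. card (parts d I) = 2)" by auto
qed

lemma mem_tnode_iff: "N \<in> tnodes d X \<Longrightarrow> x \<in> N \<Longrightarrow> y \<in> N \<longleftrightarrow> y \<in> X \<and> d x y \<le> diam d N"
proof (induction arbitrary: x y rule: tnodes.induct)
  case root
  then show ?case using diam_ge[OF finite_X] by auto
next
  case (child B C)
  have B_sub: "B \<subseteq> X" using child.hyps(1) by (rule tnodes_subset)
  have x_B: "x \<in> B" using child.prems parts_subset[OF child.hyps(3)] by blast
  have C_eq: "C = {y \<in> B. d x y < diam d B}"
    using part_eq_class[OF B_sub child.hyps(2,3) child.prems] .
  show ?case
  proof
    assume "y \<in> C"
    then show "y \<in> X \<and> d x y \<le> diam d C"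
      using child.prems C_eq B_sub diam_ge[OF finite_part[OF B_sub child.hyps(2,3)]] by blast
  next
    assume y: "y \<in> X \<and> d x y \<le> diam d C"
    then have less: "d x y < diam d B" using diam_part_less[OF B_sub child.hyps(2,3)] by simp
    then have "y \<in> B" using child.IH[OF x_B] y by simp
    then show "y \<in> C" using less C_eq by blast
  qed
qed

lemma parent_unique:
  assumes "C \<in> tinternal d X" "C' \<in> tinternal d X" "I \<in> parts d C" "I \<in> parts d C'"
  shows "C = C'"
proof -
  obtain x where x: "x \<in> I"
    using part_nonempty[OF _ _ assms(3)] tinternal_subspace[OF assms(1)] by blast
  have ball: "y \<in> A \<longleftrightarrow> y \<in> X \<and> d x y \<le> diam d A"
    if "A \<in> tinternal d X" "I \<in> parts d A" for A y
    using mem_tnode_iff[of A x y] that x parts_subset[OF that(2)] unfolding tinternal_def by blast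
  have not_less: "\<not> diam d A < diam d A'"
    if A: "A \<in> tinternal d X" "I \<in> parts d A" and A': "A' \<in> tinternal d X" "I \<in> parts d A'"
    for A A'
  proof
    assume "diam d A < diam d A'"
    then have "A \<subseteq> {y \<in> A'. d x y < diam d A'}" using ball[OF A] ball[OF A'] by fastforce
    also have "\<dots> = I"
      using part_eq_class[OF _ _ A'(2) x] tinternal_subspace[OF A'(1)] by simp
    finally show False
      using part_psubset[OF _ _ A(2)] tinternal_subspace[OF A(1)] by blast
  qed
  have "diam d C = diam d C'" using not_less[OF assms(1,3,2,4)] not_less[OF assms(2,4,1,3)] by simp
  then show ?thesis by (simp add: set_eq_iff ball[OF assms(1,3)] ball[OF assms(2,4)])
qed

lemma tnode_has_parent: "N \<in> tnodes d X \<Longrightarrow> N \<noteq> X \<Longrightarrow> \<exists>C\<in>tinternal d X. N \<in> parts d C"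
  by (cases rule: tnodes.cases) (auto simp: tinternal_def)

lemma root_not_part: "C \<in> tinternal d X \<Longrightarrow> X \<notin> parts d C"
  using tinternal_subspace[of C d X] part_psubset[of C X] by blast

lemma neighbours_tinternal:
  assumes "I \<in> tinternal d X"
  shows "{C \<in> tnodes d X. tadj d X I C} = parts d I \<union> {C \<in> tinternal d X. I \<in> parts d C}"
  using assms unfolding tadj_def tinternal_def by (auto intro: tnodes.child)

lemma card_neighbours:
  assumes I: "I \<in> tinternal d X"
  shows "card {C \<in> tnodes d X. tadj d X I C} = card (parts d I) + (if I = X then 0 else 1)"
proof (cases "I = X")
  case True
  have "{C \<in> tnodes d X. tadj d X I C} = parts d X \<union> {C \<in> tinternal d X. X \<in> parts d C}"
    using neighbours_tinternal[OF I] True by simp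
  also have "\<dots> = parts d X" using root_not_part by blast
  finally show ?thesis using True by simp
next
  case False
  have I_sub: "I \<subseteq> X" "2 \<le> card I" using tinternal_subspace[OF I] by blast+
  obtain C0 where C0: "C0 \<in> tinternal d X" "I \<in> parts d C0"
    using tnode_has_parent I False unfolding tinternal_def by blast
  have "{C \<in> tinternal d X. I \<in> parts d C} = {C0}" using C0 parent_unique by blast
  moreover have "C0 \<notin> parts d I"
    using part_psubset[OF I_sub] part_psubset[OF _ _ C0(2)] tinternal_subspace[OF C0(1)] by blast
  ultimately show ?thesis
    using neighbours_tinternal[OF I] finite_parts[OF I_sub] False by simp
qed

lemma strictly_binary_iff: "strictly_binary d X \<longleftrightarrow> (\<forall>I\<in>tinternal d X. card (parts d I) = 2)"
  unfolding strictly_binary_def using card_neighbours by auto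

end

theorem theorem13:
  fixes X :: "'a set" and d :: "'a \<Rightarrow> 'a \<Rightarrow> real"
  assumes "finite X" and "ultrametric X d" and "2 \<le> card X"
  shows "in_U X d \<longleftrightarrow>
           (strictly_binary d X \<and> inj_on (tlabel d) (tinternal d X))"
proof -
  interpret finite_ultrametric X d using assms by unfold_locales
  let ?T = "tinternal d X"
  have X_ne: "X \<noteq> {}" using assms(3) by auto
  have "card (Sp d X) = card (diam d ` ?T)" using Sp_eq_diam_tinternal[OF order_refl X_ne] by simp
  moreover have "card (diam d ` ?T) \<le> card ?T"
    and "card (diam d ` ?T) = card ?T \<longleftrightarrow> inj_on (diam d) ?T"
    using finite_tinternal[OF assms(1)] by (simp_all add: card_image_le inj_on_iff_eq_card)
  moreover note card_tinternal_bound[OF order_refl X_ne]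
  ultimately show ?thesis
    unfolding in_U_def strictly_binary_iff inj_on_tlabel_tinternal using assms by auto
qed

end
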